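(* Suppose there exist $\eta>0$, $\beta\in(0,1)$, $\delta>0$ such that $\int_{(1,\infty)}y^{1+\beta+\delta}\big|\pi(dy)-\frac{\eta\,dy}{\Gamma(-1-\beta)y^{2+\beta}}\big|<\infty$. Suppose also there are $\eta',\delta'>0$ and $\beta'\in(0,1)$ such that \[ \int_{(1,\infty)}y^{1+\beta'+\delta'}\Big|\pi(dy)-\frac{\eta'\,dy}{\Gamma(-1-\beta)y^{2+\beta'}}\Big|<\infty. \] Then $\eta'=\eta$ and $\beta'=\beta$.
   Context: $\pi$ is a measure on $(0,\infty)$ with $\int_{(0,\infty)}(y\wedge y^2)\pi(dy)<\infty$; $|\cdot|$ denotes the total variation of a signed measure; $\Gamma$ is the analytically continued Gamma function. *)

theory Defs
  imports "HOL-Analysis.Analysis"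
begin

text \<open>Total variation measure |M - N| of the signed measure M - N, restricted to the
  Borel subsets of S, defined as the supremum over finite measurable partitions
  (both M and N are assumed finite on S in the applications, so real-valued
  measure is used).\<close>
definition tv_measure :: "real measure \<Rightarrow> real measure \<Rightarrow> real set \<Rightarrow> real measure" where
  "tv_measure M N S = measure_of S {A. A \<subseteq> S \<and> A \<in> sets borel}
     (\<lambda>A. SUP P \<in> {P. finite P \<and> disjoint P \<and> P \<subseteq> {B. B \<in> sets borel \<and> B \<subseteq> A}}.
             (\<Sum>B\<in>P. ennreal \<bar>measure M B - measure N B\<bar>))"

definition stable_ref :: "real \<Rightarrow> real \<Rightarrow> real \<Rightarrow> real measure" where
  "stable_ref eta g b = density lborel
     (\<lambda>y. ennreal (indicator {1<..} y * (eta / (Gamma (-1 - g) * y powr (2 + b)))))"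

end

theory Submission
  imports Defs
begin

text \<open>
  Since the total variation measure dominates the difference of the two measures on every
  tail, the moment hypothesis gives, Markov-style,
  R^(1+\<beta>+\<delta>) |\<pi>(R,\<infinity>) - c R^(-1-\<beta>)| \<le> K with c = \<eta> / (\<Gamma>(-1-\<beta>) (1+\<beta>)),
  hence R^(1+\<beta>) \<pi>(R,\<infinity>) \<longrightarrow> c; likewise R^(1+\<beta>') \<pi>(R,\<infinity>) \<longrightarrow> c'.
  Both limits are nonzero, so the exponents agree (otherwise the rescaled tail with the
  smaller exponent would tend to 0), and then the constants agree.
\<close>

definition borel_packings :: "real set \<Rightarrow> real set set set" where
  "borel_packings A = {P. finite P \<and> disjoint P \<and> P \<subseteq> {B. B \<in> sets borel \<and> B \<subseteq> A}}"

definition total_variation :: "real measure \<Rightarrow> real measure \<Rightarrow> real set \<Rightarrow> ennreal" where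
  "total_variation M N A =
     (SUP P \<in> borel_packings A. \<Sum>B\<in>P. ennreal \<bar>measure M B - measure N B\<bar>)"

lemma tv_measure_eq_measure_of_total_variation:
  "tv_measure M N S = measure_of S {A. A \<subseteq> S \<and> A \<in> sets borel} (total_variation M N)"
  unfolding tv_measure_def total_variation_def borel_packings_def by simp

lemma empty_in_borel_packings: "{} \<in> borel_packings A"
  by (simp add: borel_packings_def)

lemma sum_le_total_variation:
  "P \<in> borel_packings A \<Longrightarrow>
     (\<Sum>B\<in>P. ennreal \<bar>measure M B - measure N B\<bar>) \<le> total_variation M N A"
  unfolding total_variation_def by (rule SUP_upper)

lemma abs_diff_le_total_variation:
  "A \<in> sets borel \<Longrightarrow> ennreal \<bar>measure M A - measure N A\<bar> \<le> total_variation M N A"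
  using sum_le_total_variation[of "{A}" A M N] by (simp add: borel_packings_def)

lemma total_variation_mono: "A \<subseteq> B \<Longrightarrow> total_variation M N A \<le> total_variation M N B"
  unfolding total_variation_def borel_packings_def by (rule SUP_subset_mono) auto

lemma total_variation_empty [simp]: "total_variation M N {} = 0"
proof -
  have "(\<Sum>B\<in>P. ennreal \<bar>measure M B - measure N B\<bar>) = 0" if "P \<in> borel_packings {}" for P
    using that by (intro sum.neutral) (auto simp: borel_packings_def)
  then show ?thesis
    unfolding total_variation_def by (auto intro!: antisym SUP_least)
qed

lemma total_variation_Un_ge:
  assumes "A \<inter> B = {}"
  shows "total_variation M N A + total_variation M N B \<le> total_variation M N (A \<union> B)"
proof -
  let ?s = "\<lambda>P. \<Sum>B\<in>P. ennreal \<bar>measure M B - measure N B\<bar>"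
  have packing_Un: "?s P + ?s Q \<le> total_variation M N (A \<union> B)"
    if P: "P \<in> borel_packings A" and Q: "Q \<in> borel_packings B" for P Q
  proof -
    have "P \<inter> Q \<subseteq> {{}}"
      using P Q assms unfolding borel_packings_def by blast
    then have "?s (P \<inter> Q) = 0"
      by (auto dest: subset_singletonD)
    moreover have "?s P + ?s Q = ?s (P \<union> Q) + ?s (P \<inter> Q)"
      using P Q by (intro sum.union_inter[symmetric]) (auto simp: borel_packings_def)
    moreover have "P \<union> Q \<in> borel_packings (A \<union> B)"
    proof -
      have "\<Union>P \<inter> \<Union>Q = {}"
        using P Q assms unfolding borel_packings_def by blast
      then show ?thesis
        using P Q unfolding borel_packings_def by (blast intro: disjoint_union)
    qed
    ultimately show ?thesis
      by (metis add.right_neutral sum_le_total_variation)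
  qed
  have "?s P + total_variation M N B \<le> total_variation M N (A \<union> B)"
    if "P \<in> borel_packings A" for P
  proof -
    have "?s P + total_variation M N B = (SUP Q \<in> borel_packings B. ?s P + ?s Q)"
      unfolding total_variation_def
      by (rule ennreal_SUP_add_right) (use empty_in_borel_packings in blast)
    also have "\<dots> \<le> total_variation M N (A \<union> B)"
      by (intro SUP_least packing_Un that)
    finally show ?thesis .
  qed
  then have "(SUP P \<in> borel_packings A. ?s P + total_variation M N B) \<le> total_variation M N (A \<union> B)"
    by (rule SUP_least)
  then show ?thesis
    unfolding total_variation_def[of M N A]
    by (subst ennreal_SUP_add_left[symmetric]) (use empty_in_borel_packings in blast)+
qed

lemma suminf_total_variation_le:
  assumes "disjoint_family A"
  shows "(\<Sum>i. total_variation M N (A i)) \<le> total_variation M N (\<Union>i. A i)"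
proof (rule suminf_le_const)
  fix n
  have "(\<Sum>i<n. total_variation M N (A i)) \<le> total_variation M N (\<Union>i<n. A i)"
  proof (induction n)
    case (Suc n)
    have disj: "(\<Union>i<n. A i) \<inter> A n = {}"
      using assms by (auto simp: disjoint_family_on_def) (metis less_irrefl disjoint_iff)
    have "(\<Sum>i<Suc n. total_variation M N (A i))
          \<le> total_variation M N (\<Union>i<n. A i) + total_variation M N (A n)"
      using Suc by (simp add: add_right_mono)
    also have "\<dots> \<le> total_variation M N ((\<Union>i<n. A i) \<union> A n)"
      using disj by (rule total_variation_Un_ge)
    also have "(\<Union>i<n. A i) \<union> A n = (\<Union>i<Suc n. A i)"
      by (auto simp: lessThan_Suc)
    finally show ?case .
  qed simp
  also have "\<dots> \<le> total_variation M N (\<Union>i. A i)"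
    by (rule total_variation_mono) auto
  finally show "(\<Sum>i<n. total_variation M N (A i)) \<le> total_variation M N (\<Union>i. A i)" .
qed (rule summableI)

lemma sum_Int_le_total_variation:
  assumes P: "P \<in> borel_packings X" and C: "C \<in> sets borel"
  shows "(\<Sum>B\<in>P. ennreal \<bar>measure M (B \<inter> C) - measure N (B \<inter> C)\<bar>) \<le> total_variation M N C"
proof -
  let ?d = "\<lambda>B. ennreal \<bar>measure M B - measure N B\<bar>"
  have "sum ?d ((\<lambda>B. B \<inter> C) ` P) = sum (?d \<circ> (\<lambda>B. B \<inter> C)) P"
  proof (rule sum.reindex_nontrivial)
    fix X Y assume "X \<in> P" "Y \<in> P" "X \<noteq> Y" "X \<inter> C = Y \<inter> C"
    then have "X \<inter> C = {}"
      using P by (auto simp: borel_packings_def disjoint_def)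
    then show "?d (X \<inter> C) = 0" by simp
  qed (use P in \<open>simp add: borel_packings_def\<close>)
  then have "(\<Sum>B\<in>P. ?d (B \<inter> C)) = sum ?d ((\<lambda>B. B \<inter> C) ` P)"
    by simp
  also have "\<dots> \<le> total_variation M N C"
  proof (rule sum_le_total_variation)
    have "disjoint ((\<lambda>B. B \<inter> C) ` P)"
      using P unfolding borel_packings_def disjoint_def by blast
    then show "(\<lambda>B. B \<inter> C) ` P \<in> borel_packings C"
      using P C by (auto simp: borel_packings_def)
  qed
  finally show ?thesis .
qed

lemma ennreal_abs_le_suminf_abs:
  fixes x :: "nat \<Rightarrow> real"
  assumes "x sums s"
  shows "ennreal \<bar>s\<bar> \<le> (\<Sum>i. ennreal \<bar>x i\<bar>)"
proof (cases "summable (\<lambda>i. \<bar>x i\<bar>)")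
  case True
  have "\<bar>s\<bar> \<le> (\<Sum>i. \<bar>x i\<bar>)"
    using assms summable_rabs[OF True] by (simp add: sums_iff)
  moreover have "(\<Sum>i. ennreal \<bar>x i\<bar>) = ennreal (\<Sum>i. \<bar>x i\<bar>)"
    using True by (intro suminf_ennreal2) auto
  ultimately show ?thesis
    by (metis ennreal_leI)
next
  case False
  have "(\<Sum>i. ennreal \<bar>x i\<bar>) = \<infinity>"
  proof (rule ccontr)
    assume "(\<Sum>i. ennreal \<bar>x i\<bar>) \<noteq> \<infinity>"
    then have "summable (\<lambda>i. \<bar>x i\<bar>)"
      by (intro summable_suminf_not_top) auto
    with False show False ..
  qed
  then show ?thesis
    by simp
qed

lemma measure_Int_sums:
  assumes "range A \<subseteq> sets M" "disjoint_family A"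
    and "B \<in> sets M" "B \<subseteq> (\<Union>i. A i)" "emeasure M B \<noteq> \<infinity>"
  shows "(\<lambda>i. measure M (B \<inter> A i)) sums measure M B"
proof -
  have B: "(\<Union>i. B \<inter> A i) = B"
    using assms(4) by blast
  have "(\<lambda>i. measure M (B \<inter> A i)) sums measure M (\<Union>i. B \<inter> A i)"
    using assms B by (intro measure_UNION) (auto simp: disjoint_family_on_def)
  then show ?thesis
    unfolding B .
qed

lemma total_variation_UN_le:
  assumes M: "\<And>B. B \<in> sets borel \<Longrightarrow> B \<subseteq> (\<Union>i. A i) \<Longrightarrow> B \<in> fmeasurable M"
    and N: "\<And>B. B \<in> sets borel \<Longrightarrow> B \<subseteq> (\<Union>i. A i) \<Longrightarrow> B \<in> fmeasurable N"
    and A: "range A \<subseteq> sets borel" "disjoint_family A"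
  shows "total_variation M N (\<Union>i. A i) \<le> (\<Sum>i. total_variation M N (A i))"
  unfolding total_variation_def[of M N "\<Union>i. A i"]
proof (rule SUP_least)
  let ?d = "\<lambda>B. ennreal \<bar>measure M B - measure N B\<bar>"
  fix P assume P: "P \<in> borel_packings (\<Union>i. A i)"
  have "(\<Sum>B\<in>P. ?d B) \<le> (\<Sum>B\<in>P. \<Sum>i. ?d (B \<inter> A i))"
  proof (rule sum_mono)
    fix B assume "B \<in> P"
    then have B: "B \<in> sets borel" "B \<subseteq> (\<Union>i. A i)"
      using P by (auto simp: borel_packings_def)
    have "range A \<subseteq> sets M" "range A \<subseteq> sets N"
      using A M N by (auto simp: fmeasurable_def)
    then have "(\<lambda>i. measure M (B \<inter> A i) - measure N (B \<inter> A i)) sums (measure M B - measure N B)"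
      using A B M[OF B] N[OF B] by (intro sums_diff measure_Int_sums) (auto simp: fmeasurable_def)
    then show "?d B \<le> (\<Sum>i. ?d (B \<inter> A i))"
      by (rule ennreal_abs_le_suminf_abs)
  qed
  also have "\<dots> = (\<Sum>i. \<Sum>B\<in>P. ?d (B \<inter> A i))"
    by (rule suminf_sum[symmetric]) (rule summableI)
  also have "\<dots> \<le> (\<Sum>i. total_variation M N (A i))"
    using P A by (intro suminf_le summableI sum_Int_le_total_variation) auto
  finally show "(\<Sum>B\<in>P. ?d B) \<le> (\<Sum>i. total_variation M N (A i))" .
qed

lemma sigma_algebra_borel_subsets:
  assumes "S \<in> sets borel"
  shows "sigma_algebra S {A. A \<subseteq> S \<and> A \<in> sets borel}"
proof -
  have "sets (restrict_space borel S) = {A. A \<subseteq> S \<and> A \<in> sets borel}"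
    using assms sets_restrict_space_iff[of S borel] by auto
  then show ?thesis
    using sets.sigma_algebra_axioms[of "restrict_space borel S"] by (simp add: space_restrict_space)
qed

lemma sets_tv_measure:
  "S \<in> sets borel \<Longrightarrow> sets (tv_measure M N S) = {A. A \<subseteq> S \<and> A \<in> sets borel}"
  unfolding tv_measure_eq_measure_of_total_variation
  by (rule sigma_algebra.sets_measure_of_eq[OF sigma_algebra_borel_subsets])

text \<open>
  \<^const>\<open>measure_of\<close> yields the zero measure unless the set function is countably additive,
  which for \<^const>\<open>total_variation\<close> needs both measures to be finite on \<open>S\<close>.
\<close>

lemma emeasure_tv_measure:
  assumes S: "S \<in> sets borel"
    and M: "\<And>B. B \<in> sets borel \<Longrightarrow> B \<subseteq> S \<Longrightarrow> B \<in> fmeasurable M"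
    and N: "\<And>B. B \<in> sets borel \<Longrightarrow> B \<subseteq> S \<Longrightarrow> B \<in> fmeasurable N"
    and A: "A \<in> sets borel" "A \<subseteq> S"
  shows "emeasure (tv_measure M N S) A = total_variation M N A"
  unfolding tv_measure_eq_measure_of_total_variation
proof (rule emeasure_measure_of_sigma[OF sigma_algebra_borel_subsets[OF S]])
  let ?A = "{A. A \<subseteq> S \<and> A \<in> sets borel}"
  show "positive ?A (total_variation M N)"
    by (simp add: positive_def)
  show "countably_additive ?A (total_variation M N)"
    unfolding countably_additive_def
  proof (intro allI impI)
    fix F :: "nat \<Rightarrow> real set"
    assume F: "range F \<subseteq> ?A" "disjoint_family F" "\<Union>(range F) \<in> ?A"
    show "(\<Sum>i. total_variation M N (F i)) = total_variation M N (\<Union>(range F))"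
    proof (rule antisym)
      show "(\<Sum>i. total_variation M N (F i)) \<le> total_variation M N (\<Union>(range F))"
        using F(2) by (rule suminf_total_variation_le)
      show "total_variation M N (\<Union>(range F)) \<le> (\<Sum>i. total_variation M N (F i))"
        using F M N by (intro total_variation_UN_le) auto
    qed
  qed
qed (use A in auto)

lemma tail_le_nn_integral_tv_measure:
  assumes "S \<in> sets borel"
    and "\<And>B. B \<in> sets borel \<Longrightarrow> B \<subseteq> S \<Longrightarrow> B \<in> fmeasurable M"
    and "\<And>B. B \<in> sets borel \<Longrightarrow> B \<subseteq> S \<Longrightarrow> B \<in> fmeasurable N"
    and "p \<ge> 0" "R \<ge> 0" "{R<..} \<subseteq> S"
  shows "ennreal (R powr p * \<bar>measure M {R<..} - measure N {R<..}\<bar>)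
           \<le> (\<integral>\<^sup>+y. ennreal (y powr p) \<partial>tv_measure M N S)"
proof -
  let ?\<nu> = "tv_measure M N S"
  have tail: "{R<..} \<in> sets ?\<nu>"
    using assms by (simp add: sets_tv_measure)
  have "ennreal (R powr p * \<bar>measure M {R<..} - measure N {R<..}\<bar>)
        = ennreal (R powr p) * ennreal \<bar>measure M {R<..} - measure N {R<..}\<bar>"
    by (simp add: ennreal_mult)
  also have "\<dots> \<le> ennreal (R powr p) * emeasure ?\<nu> {R<..}"
    using assms by (intro mult_left_mono) (simp_all add: emeasure_tv_measure abs_diff_le_total_variation)
  also have "\<dots> = (\<integral>\<^sup>+y. ennreal (R powr p) * indicator {R<..} y \<partial>?\<nu>)"
    using tail by (simp add: nn_integral_cmult_indicator)
  also have "\<dots> \<le> (\<integral>\<^sup>+y. ennreal (y powr p) \<partial>?\<nu>)"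
    using assms by (intro nn_integral_mono) (auto simp: indicator_def intro!: ennreal_leI powr_mono2)
  finally show ?thesis .
qed

lemma Gamma_pos_between_minus_two_and_minus_one:
  fixes x :: real
  assumes "-2 < x" "x < -1"
  shows "Gamma x > 0"
proof -
  have "rGamma x = x * (x + 1) * rGamma (x + 1 + 1)"
    using rGamma_plus1[of x] rGamma_plus1[of "x + 1"] by (simp add: mult.assoc)
  moreover have "rGamma (x + 1 + 1) > 0"
    using assms by (simp add: rGamma_inverse_Gamma)
  moreover have "x * (x + 1) > 0"
    using assms by (intro mult_neg_neg) auto
  ultimately have "rGamma x > 0"
    by simp
  then show ?thesis
    by (simp add: rGamma_inverse_Gamma)
qed

text \<open>The density vanishes at 1, so tails are taken open; \<open>R = 1\<close> then gives the total mass.\<close>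

lemma emeasure_stable_ref_tail:
  assumes "Gamma (-1 - g) > 0" "eta \<ge> 0" "b > -1" "R \<ge> 1"
  shows "emeasure (stable_ref eta g b) {R<..} = ennreal (eta / Gamma (-1 - g) / (1 + b) * R powr (-(1 + b)))"
proof -
  define c where "c = eta / Gamma (-1 - g)"
  have "c \<ge> 0"
    using assms by (simp add: c_def)
  have "((\<lambda>x. x powr (-(2 + b))) has_integral R powr (-(1 + b)) / (1 + b)) {R..}"
    using has_integral_powr_to_inf[of "-(2 + b)" R] assms by (simp add: minus_divide_right add.commute)
  then have "((\<lambda>x. c * inverse (x powr (2 + b))) has_integral c * (R powr (-(1 + b)) / (1 + b))) {R..}"
    unfolding powr_minus[of _ "2 + b"] by (rule has_integral_mult_right)
  then have integral: "(\<integral>\<^sup>+x. ennreal (c * inverse (x powr (2 + b))) * indicator {R..} x \<partial>lborel)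
      = ennreal (c * (R powr (-(1 + b)) / (1 + b)))"
    using \<open>c \<ge> 0\<close> assms by (intro nn_integral_has_integral_lebesgue') auto
  have "emeasure (stable_ref eta g b) {R<..}
      = (\<integral>\<^sup>+x. ennreal (indicator {1<..} x * (eta / (Gamma (-1 - g) * x powr (2 + b))))
                  * indicator {R<..} x \<partial>lborel)"
    unfolding stable_ref_def by (rule emeasure_density) auto
  also have "\<dots> = (\<integral>\<^sup>+x. ennreal (c * inverse (x powr (2 + b))) * indicator {R..} x \<partial>lborel)"
    using assms
    by (intro nn_integral_cong_AE eventually_mono[OF AE_lborel_singleton[of R]])
      (auto simp: indicator_def c_def divide_inverse)
  also have "\<dots> = ennreal (c * (R powr (-(1 + b)) / (1 + b)))"
    by (rule integral)
  finally show ?thesis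
    by (simp add: c_def)
qed

lemma stable_ref_fmeasurable:
  assumes "Gamma (-1 - g) > 0" "eta \<ge> 0" "b > -1" "B \<in> sets borel" "B \<subseteq> {1<..}"
  shows "B \<in> fmeasurable (stable_ref eta g b)"
proof (rule fmeasurableI2)
  show "{1<..} \<in> fmeasurable (stable_ref eta g b)"
    using emeasure_stable_ref_tail[of g eta b 1] assms
    by (intro fmeasurableI) (auto simp: stable_ref_def)
qed (use assms in \<open>auto simp: stable_ref_def\<close>)

lemma tendsto_powr_mult_of_remainder_bound:
  fixes m :: "real \<Rightarrow> real"
  assumes "d > 0"
    and bound: "\<forall>\<^sub>F R in at_top. R powr (a + d) * \<bar>m R - c * R powr (-a)\<bar> \<le> K"
  shows "((\<lambda>R. R powr a * m R) \<longlongrightarrow> c) at_top"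
proof (rule LIM_zero_cancel, rule Lim_null_comparison)
  show "\<forall>\<^sub>F R in at_top. norm (R powr a * m R - c) \<le> R powr (-d) * K"
    using bound eventually_gt_at_top[of 0]
  proof eventually_elim
    case (elim R)
    have "R powr a * m R - c = R powr (-d) * (R powr (a + d) * (m R - c * R powr (-a)))"
      using elim(2) by (simp add: powr_add powr_minus field_simps)
    then show ?case
      using elim by (simp add: abs_mult mult_left_mono)
  qed
  show "((\<lambda>R. R powr (-d) * K) \<longlongrightarrow> 0) at_top"
    using assms(1) by (auto intro!: tendsto_mult_left_zero tendsto_neg_powr filterlim_ident)
qed

lemma tendsto_powr_mult_zero:
  fixes m :: "real \<Rightarrow> real"
  assumes "a1 < a2" "((\<lambda>R. R powr a2 * m R) \<longlongrightarrow> c) at_top"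
  shows "((\<lambda>R. R powr a1 * m R) \<longlongrightarrow> 0) at_top"
proof -
  have "((\<lambda>R. R powr (a1 - a2) * (R powr a2 * m R)) \<longlongrightarrow> 0 * c) at_top"
    using assms by (intro tendsto_mult tendsto_neg_powr filterlim_ident) auto
  moreover have "\<forall>\<^sub>F R in at_top. R powr (a1 - a2) * (R powr a2 * m R) = R powr a1 * m R"
    using eventually_gt_at_top[of 0] by eventually_elim (simp add: powr_diff)
  ultimately show ?thesis
    by (simp add: tendsto_cong)
qed

lemma powr_mult_limits_unique:
  fixes m :: "real \<Rightarrow> real"
  assumes lim1: "((\<lambda>R. R powr a1 * m R) \<longlongrightarrow> c1) at_top"
    and lim2: "((\<lambda>R. R powr a2 * m R) \<longlongrightarrow> c2) at_top"
    and "c1 \<noteq> 0" "c2 \<noteq> 0"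
  shows "a1 = a2 \<and> c1 = c2"
proof -
  have "a1 = a2"
  proof (rule linorder_cases)
    assume "a1 < a2"
    then have "c1 = 0"
      using lim1 lim2 by (metis tendsto_powr_mult_zero tendsto_unique trivial_limit_at_top_linorder)
    with \<open>c1 \<noteq> 0\<close> show ?thesis ..
  next
    assume "a2 < a1"
    then have "c2 = 0"
      using lim1 lim2 by (metis tendsto_powr_mult_zero tendsto_unique trivial_limit_at_top_linorder)
    with \<open>c2 \<noteq> 0\<close> show ?thesis ..
  qed
  with lim1 lim2 show ?thesis
    using tendsto_unique[OF trivial_limit_at_top_linorder] by blast
qed


lemma fmeasurable_above_one_of_min_moment:
  fixes \<pi> :: "real measure"
  assumes sets_pi: "sets \<pi> = sets (restrict_space borel {0<..})"
    and moment: "(\<integral>\<^sup>+ y. ennreal (min y (y\<^sup>2)) \<partial>\<pi>) < \<infinity>"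
    and B: "B \<in> sets borel" "B \<subseteq> {1<..}"
  shows "B \<in> fmeasurable \<pi>"
proof (rule fmeasurableI)
  show B_sets: "B \<in> sets \<pi>"
    using B unfolding sets_pi by (auto simp: sets_restrict_space_iff)
  have "emeasure \<pi> B = (\<integral>\<^sup>+ y. indicator B y \<partial>\<pi>)"
    using B_sets by simp
  also have "\<dots> \<le> (\<integral>\<^sup>+ y. ennreal (min y (y\<^sup>2)) \<partial>\<pi>)"
    using B by (intro nn_integral_mono) (auto simp: indicator_def)
  finally show "emeasure \<pi> B < \<infinity>"
    using moment by (rule le_less_trans)
qed

lemma tendsto_tail_of_tv_moment:
  fixes \<pi> :: "real measure"
  assumes \<pi>_fin: "\<And>B. B \<in> sets borel \<Longrightarrow> B \<subseteq> {1<..} \<Longrightarrow> B \<in> fmeasurable \<pi>"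
    and \<Gamma>: "Gamma (-1 - g) > 0" and "eta \<ge> 0" "b > -1" "d > 0"
    and moment: "(\<integral>\<^sup>+ y. ennreal (y powr (1 + b + d))
                   \<partial>tv_measure \<pi> (stable_ref eta g b) {1<..}) < \<infinity>"
  shows "((\<lambda>R. R powr (1 + b) * measure \<pi> {R<..}) \<longlongrightarrow> eta / Gamma (-1 - g) / (1 + b)) at_top"
proof -
  let ?c = "eta / Gamma (-1 - g) / (1 + b)"
  obtain K where K: "K \<ge> 0"
    "(\<integral>\<^sup>+ y. ennreal (y powr (1 + b + d)) \<partial>tv_measure \<pi> (stable_ref eta g b) {1<..}) = ennreal K"
    using moment less_top_ennreal by auto
  have "\<forall>\<^sub>F R in at_top. R powr (1 + b + d) * \<bar>measure \<pi> {R<..} - ?c * R powr (-(1 + b))\<bar> \<le> K"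
    using eventually_ge_at_top[of 1]
  proof eventually_elim
    case (elim R)
    have "measure (stable_ref eta g b) {R<..} = ?c * R powr (-(1 + b))"
      using emeasure_stable_ref_tail[OF \<Gamma>] elim assms
      by (intro measure_eq_emeasure_eq_ennreal) auto
    moreover have "ennreal (R powr (1 + b + d) *
        \<bar>measure \<pi> {R<..} - measure (stable_ref eta g b) {R<..}\<bar>) \<le> ennreal K"
      unfolding K(2)[symmetric] using elim assms
      by (intro tail_le_nn_integral_tv_measure stable_ref_fmeasurable \<pi>_fin) auto
    ultimately show ?case
      using K(1) by simp
  qed
  with \<open>d > 0\<close> show ?thesis
    by (rule tendsto_powr_mult_of_remainder_bound)
qed

theorem lemma2p2:
  fixes \<pi> :: "real measure"
    and \<eta> \<beta> \<delta> \<eta>' \<beta>' \<delta>' :: real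
  assumes sets_pi: "sets \<pi> = sets (restrict_space borel {0<..})"
    and pi_int: "(\<integral>\<^sup>+ y. ennreal (min y (y\<^sup>2)) \<partial>\<pi>) < \<infinity>"
    and "\<eta> > 0" and "0 < \<beta>" and "\<beta> < 1" and "\<delta> > 0"
    and H1: "(\<integral>\<^sup>+ y. ennreal (y powr (1 + \<beta> + \<delta>))
               \<partial>(tv_measure \<pi> (stable_ref \<eta> \<beta> \<beta>) {1<..})) < \<infinity>"
    and "\<eta>' > 0" and "0 < \<beta>'" and "\<beta>' < 1" and "\<delta>' > 0"
    and H2: "(\<integral>\<^sup>+ y. ennreal (y powr (1 + \<beta>' + \<delta>'))
               \<partial>(tv_measure \<pi> (stable_ref \<eta>' \<beta> \<beta>') {1<..})) < \<infinity>"
  shows "\<eta>' = \<eta> \<and> \<beta>' = \<beta>"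
proof -
  have \<Gamma>: "Gamma (-1 - \<beta>) > 0"
    using assms by (intro Gamma_pos_between_minus_two_and_minus_one) auto
  have \<pi>_fin: "\<And>B. B \<in> sets borel \<Longrightarrow> B \<subseteq> {1<..} \<Longrightarrow> B \<in> fmeasurable \<pi>"
    using sets_pi pi_int by (rule fmeasurable_above_one_of_min_moment)
  have "((\<lambda>R. R powr (1 + \<beta>) * measure \<pi> {R<..}) \<longlongrightarrow> \<eta> / Gamma (-1 - \<beta>) / (1 + \<beta>)) at_top"
    using \<pi>_fin \<Gamma> H1 assms by (intro tendsto_tail_of_tv_moment) auto
  moreover have "((\<lambda>R. R powr (1 + \<beta>') * measure \<pi> {R<..}) \<longlongrightarrow> \<eta>' / Gamma (-1 - \<beta>) / (1 + \<beta>')) at_top"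
    using \<pi>_fin \<Gamma> H2 assms by (intro tendsto_tail_of_tv_moment) auto
  ultimately have "1 + \<beta> = 1 + \<beta>' \<and> \<eta> / Gamma (-1 - \<beta>) / (1 + \<beta>) = \<eta>' / Gamma (-1 - \<beta>) / (1 + \<beta>')"
    using \<Gamma> assms by (intro powr_mult_limits_unique) auto
  then have "\<beta>' = \<beta>" "\<eta> / Gamma (-1 - \<beta>) / (1 + \<beta>) = \<eta>' / Gamma (-1 - \<beta>) / (1 + \<beta>)"
    by auto
  moreover have "Gamma (-1 - \<beta>) * (1 + \<beta>) \<noteq> 0"
    using \<Gamma> assms by simp
  ultimately show ?thesis
    by simp
qed

end
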